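(* For $m\ge 2$ and $E>0$ let $$f_m(E)=\frac{e^{-4E}\,\Gamma(m)\,I_{m-1}(4E)}{2m\,(2E)^{m-3}}.$$ (i) If $a>0$ and $E=a(m-1)$, then $f_m(E)$ decays exponentially in $m$: there is $c\in(0,1)$ with $f_m(a(m-1))=O(c^m)$. (ii) If $a>0$, $r<1$ and $E=am^r$, then $f_m(E)$ does not decay exponentially: for every $b\in(0,1)$, $f_m(am^r)/b^m\to\infty$ as $m\to\infty$. (iii) If $E=E_m$ vanishes exponentially in $m$ (i.e. $E_m=O(q^m)$ for some $q\in(0,1)$), then $f_m(E_m)$ decays exponentially in $m$.
   Context: $I_{m-1}$ is the modified Bessel function of the first kind of order $m-1$. The quantity $f_m(E)$ is the prefactor in the paper's Proposition 1: for a coherent input of total intensity $E$ on $m$ modes and a Haar-random linear optical circuit, the expected squared gradient of the compiling cost $1-|\langle\vec u|U(\theta)|\vec u\rangle|^2$ lies in $f_m(E)[\xi_{\min},\xi_{\max}]$, with $\xi_{\min},\xi_{\max}$ the minimal/maximal squared column norms of the generator matrix of the trained layer. *)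

theory Defs
  imports "HOL-Analysis.Analysis" "HOL-Library.Landau_Symbols"
begin

text \<open>Modified Bessel function of the first kind of integer order n:
  I_n(x) = sum over k of (x/2)^(2k+n) / (k! * Gamma(k+n+1)), with Gamma(k+n+1) = (k+n)!.\<close>
definition besselI :: "nat \<Rightarrow> real \<Rightarrow> real" where
  "besselI n x = (\<Sum>k. (x / 2) ^ (2 * k + n) / (fact k * fact (k + n)))"

definition fpref :: "nat \<Rightarrow> real \<Rightarrow> real" where
  "fpref m E = exp (- 4 * E) * Gamma (real m) * besselI (m - 1) (4 * E)
               / (2 * real m * (2 * E) powr (real m - 3))"

end

theory Submission
  imports Defs "HOL-Real_Asymp.Real_Asymp"
begin

text \<open>
  Put \<open>n = m - 1\<close> and let \<open>L = (2E)^n / n!\<close> be the leading term of the series of \<open>I_n(4E)\<close>;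
  then \<open>f_m(E) = (2E)^2 / (2m) * exp(-4E) * I_n(4E) / L\<close>. Each term of the Bessel series is a
  product of two exponential-series terms, which gives \<open>L \<le> I_n(4E) \<le> L * exp(4E^2/n)\<close> and
  \<open>I_n(4E) \<le> exp(4E)\<close>. For \<open>E = an\<close> the first upper bound decays like \<open>exp(-4a(1-a))^n\<close>,
  which suffices when \<open>a < 1\<close>; the second, with \<open>n! \<le> n^n\<close>, decays like \<open>(2a)^-n\<close>, which
  suffices when \<open>a \<ge> 1\<close>. For exponentially small \<open>E\<close> the first bound gives \<open>f_m(E) = O(E^2)\<close>.
  For \<open>E = a m^r\<close> with \<open>r < 1\<close> the lower bound loses only the subexponential factor
  \<open>exp(-4a m^r)\<close>, which cannot compensate \<open>b^m\<close>.
\<close>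

lemma exp_series_sums: "(\<lambda>k. (t::real) ^ k / fact k) sums exp t"
  using exp_converges[of t] by (simp add: divide_inverse mult.commute scaleR_conv_of_real)

lemma power_div_fact_le_exp: "(t::real) \<ge> 0 \<Longrightarrow> t ^ n / fact n \<le> exp t"
  using sum_le_suminf[OF sums_summable[OF exp_series_sums], of "{n}"]
  by (simp add: sums_unique[OF exp_series_sums])

lemma dominated_by_exp_series:
  fixes f :: "nat \<Rightarrow> real"
  assumes "\<And>k. 0 \<le> f k" and "\<And>k. f k \<le> C * (y ^ k / fact k)"
  shows "summable f" and "suminf f \<le> C * exp y"
proof -
  have dom: "(\<lambda>k. C * (y ^ k / fact k)) sums (C * exp y)"
    by (rule sums_mult[OF exp_series_sums])
  show "summable f"
    by (rule summable_comparison_test[OF _ sums_summable[OF dom]]) (use assms in auto)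
  then show "suminf f \<le> C * exp y"
    using suminf_le[OF _ \<open>summable f\<close> sums_summable[OF dom]] assms(2) sums_unique[OF dom] by auto
qed

lemma fact_times_power_le_fact_add: "fact n * real n ^ k \<le> (fact (k + n) :: real)"
proof (induction k)
  case (Suc k)
  have "fact n * real n ^ Suc k = (fact n * real n ^ k) * real n" by simp
  also have "\<dots> \<le> fact (k + n) * real (Suc (k + n))"
    by (rule mult_mono[OF Suc]) auto
  finally show ?case by (simp add: mult.commute)
qed simp

lemma linear_times_power_bigo:
  assumes "0 \<le> p" and "p < c"
  shows "(\<lambda>n. real n * p ^ n) \<in> O(\<lambda>n. c ^ n)"
proof (rule bigoI[where c = 1])
  have "c > 0" using assms by simp
  have "(\<lambda>n. real n * (p / c) ^ n) \<longlonglongrightarrow> 0"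
    using powser_times_n_limit_0[of "p / c"] assms \<open>c > 0\<close> by simp
  then have "\<forall>\<^sub>F n in sequentially. real n * (p / c) ^ n < 1"
    by (rule order_tendstoD) simp
  then show "\<forall>\<^sub>F n in sequentially. norm (real n * p ^ n) \<le> 1 * norm (c ^ n)"
  proof (rule eventually_mono)
    fix n assume "real n * (p / c) ^ n < 1"
    then have "real n * (p / c) ^ n * c ^ n \<le> c ^ n"
      using assms \<open>c > 0\<close> by (intro mult_left_le_one_le) auto
    then show "norm (real n * p ^ n) \<le> 1 * norm (c ^ n)"
      using assms \<open>c > 0\<close> by (simp add: power_divide)
  qed
qed

lemma besselI_term_eq:
  "((x::real) / 2) ^ (2 * k + n) / (fact k * fact (k + n)) =
     ((x / 2) ^ k / fact k) * ((x / 2) ^ (k + n) / fact (k + n))"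
  by (simp add: power_add[symmetric] mult_2 add.assoc)

lemma besselI_term_le_exp:
  assumes "(x::real) \<ge> 0"
  shows "(x / 2) ^ (2 * k + n) / (fact k * fact (k + n)) \<le> exp (x / 2) * ((x / 2) ^ k / fact k)"
  unfolding besselI_term_eq using assms
  by (subst mult.commute) (intro mult_right_mono power_div_fact_le_exp, auto)

lemma besselI_summable:
  assumes "(x::real) \<ge> 0"
  shows "summable (\<lambda>k. (x / 2) ^ (2 * k + n) / (fact k * fact (k + n)))"
  by (rule dominated_by_exp_series(1)[OF _ besselI_term_le_exp]) (use assms in auto)

lemma besselI_le_exp:
  assumes "x \<ge> 0"
  shows "besselI n x \<le> exp x"
proof -
  have "besselI n x \<le> exp (x / 2) * exp (x / 2)"
    unfolding besselI_def
    by (rule dominated_by_exp_series(2)[OF _ besselI_term_le_exp]) (use assms in auto)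
  then show ?thesis by (simp add: exp_add[symmetric])
qed

lemma besselI_term_le_exp_series_term:
  assumes "(t::real) \<ge> 0" and "n \<ge> 1"
  shows "t ^ (2 * k + n) / (fact k * fact (k + n)) \<le> t ^ n / fact n * ((t ^ 2 / n) ^ k / fact k)"
proof -
  have "t ^ (2 * k + n) / (fact k * fact (k + n)) \<le> t ^ (2 * k + n) / (fact k * (fact n * real n ^ k))"
    using assms fact_times_power_le_fact_add[of n k]
    by (intro divide_left_mono mult_left_mono mult_pos_pos) auto
  also have "\<dots> = t ^ n / fact n * ((t ^ 2 / n) ^ k / fact k)"
    by (simp add: power_divide power_add power_mult[symmetric] mult.commute)
  finally show ?thesis .
qed

lemma besselI_le:
  assumes "x \<ge> 0" and "n \<ge> 1"
  shows "besselI n x \<le> (x / 2) ^ n / fact n * exp ((x / 2) ^ 2 / n)"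
  unfolding besselI_def
  by (rule dominated_by_exp_series(2)[OF _ besselI_term_le_exp_series_term]) (use assms in auto)

lemma besselI_ge_leading_term:
  assumes "x \<ge> 0"
  shows "(x / 2) ^ n / fact n \<le> besselI n x"
  using sum_le_suminf[OF besselI_summable[OF assms], of "{0}"] assms
  unfolding besselI_def by simp

lemma fpref_eq:
  assumes "m \<ge> 1" and "E > 0"
  shows "fpref m E = (2 * E) ^ 2 / (2 * real m) *
           (exp (- 4 * E) * besselI (m - 1) (4 * E) / ((2 * E) ^ (m - 1) / fact (m - 1)))"
proof -
  define y where "y = 2 * E"
  have "y > 0" using assms by (simp add: y_def)
  have Gamma: "Gamma (real m) = fact (m - 1)"
    using Gamma_fact[of "m - 1"] assms by (simp add: of_nat_diff)
  have "real m - 3 = real (m - 1) - real 2"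
    using assms by (simp add: of_nat_diff)
  then have "y powr (real m - 3) = y powr real (m - 1) / y powr real 2"
    by (simp only: powr_diff)
  also have "\<dots> = y ^ (m - 1) / y ^ 2"
    using \<open>y > 0\<close> by (simp only: powr_realpow)
  finally show ?thesis
    unfolding fpref_def y_def[symmetric] Gamma using assms \<open>y > 0\<close> by (simp add: field_simps)
qed

lemma fpref_ge:
  assumes "m \<ge> 1" and "E > 0"
  shows "(2 * E) ^ 2 / (2 * real m) * exp (- 4 * E) \<le> fpref m E"
proof -
  define L where "L = (2 * E) ^ (m - 1) / fact (m - 1)"
  have "4 * E / 2 = 2 * E" by simp
  then have "L \<le> besselI (m - 1) (4 * E)"
    using besselI_ge_leading_term[of "4 * E" "m - 1"] assms unfolding L_def by simp
  moreover have "L > 0" using assms by (simp add: L_def)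
  ultimately have "exp (- 4 * E) \<le> exp (- 4 * E) * besselI (m - 1) (4 * E) / L"
    by (simp add: le_divide_eq)
  then show ?thesis
    unfolding fpref_eq[OF assms] L_def[symmetric] by (rule mult_left_mono) simp
qed

lemma fpref_nonneg: "m \<ge> 1 \<Longrightarrow> E > 0 \<Longrightarrow> 0 \<le> fpref m E"
  by (rule order.trans[OF _ fpref_ge]) simp_all

lemma fpref_le_exp:
  assumes "m \<ge> 2" and "E > 0"
  shows "fpref m E \<le> (2 * E) ^ 2 / (2 * real m) * exp (4 * E ^ 2 / real (m - 1) - 4 * E)"
proof -
  define L where "L = (2 * E) ^ (m - 1) / fact (m - 1)"
  have "4 * E / 2 = 2 * E" "(2 * E) ^ 2 = 4 * E ^ 2" by (simp_all add: power2_eq_square)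
  then have "besselI (m - 1) (4 * E) \<le> L * exp (4 * E ^ 2 / real (m - 1))"
    using besselI_le[of "4 * E" "m - 1"] assms unfolding L_def by simp
  moreover have "L > 0" using assms by (simp add: L_def)
  ultimately have "exp (- 4 * E) * besselI (m - 1) (4 * E) / L \<le> exp (4 * E ^ 2 / real (m - 1) - 4 * E)"
    by (simp add: pos_divide_le_eq exp_diff exp_minus field_simps)
  moreover have "m \<ge> 1" using assms by simp
  ultimately show ?thesis
    unfolding fpref_eq[OF \<open>m \<ge> 1\<close> assms(2)] L_def[symmetric] by (intro mult_left_mono) simp_all
qed

lemma fpref_le_fact:
  assumes "m \<ge> 1" and "E > 0"
  shows "fpref m E \<le> (2 * E) ^ 2 / (2 * real m) * (fact (m - 1) / (2 * E) ^ (m - 1))"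
proof -
  define L where "L = (2 * E) ^ (m - 1) / fact (m - 1)"
  have "L > 0" using assms by (simp add: L_def)
  then have "exp (- 4 * E) * besselI (m - 1) (4 * E) / L \<le> 1 / L"
    using besselI_le_exp[of "4 * E" "m - 1"] assms
    by (simp add: divide_right_mono exp_minus field_simps)
  then show ?thesis
    unfolding fpref_eq[OF assms] L_def[symmetric] by (rule mult_left_mono[THEN order.trans]) (simp_all add: L_def)
qed

lemma fpref_le_square:
  assumes "m \<ge> 2" and "E > 0"
  shows "fpref m E \<le> E ^ 2 * exp (4 * E ^ 2)"
proof -
  have prefactor: "(2 * E) ^ 2 / (2 * real m) \<le> E ^ 2"
    using assms by (simp add: power_mult_distrib field_simps)
  have "4 * E ^ 2 / real (m - 1) \<le> 4 * E ^ 2 / 1"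
    using assms by (intro divide_left_mono) auto
  then have exponent: "exp (4 * E ^ 2 / real (m - 1) - 4 * E) \<le> exp (4 * E ^ 2)"
    using assms by simp
  show ?thesis
    using fpref_le_exp[OF assms] mult_mono[OF prefactor exponent] by simp
qed

lemma linear_prefactor_le:
  assumes "m \<ge> 1"
  shows "(2 * (a * (real m - 1))) ^ 2 / (2 * real m) \<le> 2 * a ^ 2 * (real m - 1)"
proof -
  have "(2 * (a * (real m - 1))) ^ 2 / (2 * real m) = 2 * a ^ 2 * (real m - 1) * ((real m - 1) / real m)"
    using assms by (simp add: power2_eq_square field_simps)
  also have "\<dots> \<le> 2 * a ^ 2 * (real m - 1)"
    using assms by (intro mult_left_le) auto
  finally show ?thesis .
qed

lemma fpref_linear_le_exp:
  assumes "m \<ge> 2" and "a > 0"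
  shows "fpref m (a * (real m - 1)) \<le> 2 * a ^ 2 * (real m - 1) * exp (- 4 * a * (1 - a)) ^ (m - 1)"
proof -
  let ?E = "a * (real m - 1)"
  have "?E > 0" using assms by simp
  have exponent: "4 * ?E ^ 2 / real (m - 1) - 4 * ?E = real (m - 1) * (- 4 * a * (1 - a))"
    using assms by (simp add: of_nat_diff power2_eq_square field_simps)
  have rate: "exp (4 * ?E ^ 2 / real (m - 1) - 4 * ?E) = exp (- 4 * a * (1 - a)) ^ (m - 1)"
    by (simp only: exponent exp_of_nat_mult)
  have "fpref m ?E \<le> (2 * ?E) ^ 2 / (2 * real m) * exp (- 4 * a * (1 - a)) ^ (m - 1)"
    using fpref_le_exp[OF assms(1) \<open>?E > 0\<close>] unfolding rate .
  also have "\<dots> \<le> 2 * a ^ 2 * (real m - 1) * exp (- 4 * a * (1 - a)) ^ (m - 1)"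
    using assms by (intro mult_right_mono linear_prefactor_le) auto
  finally show ?thesis .
qed

lemma fpref_linear_le_power:
  assumes "m \<ge> 2" and "a > 0"
  shows "fpref m (a * (real m - 1)) \<le> 2 * a ^ 2 * (real m - 1) * (1 / (2 * a)) ^ (m - 1)"
proof -
  let ?E = "a * (real m - 1)"
  have "?E > 0" using assms by simp
  have "fact (m - 1) / (2 * ?E) ^ (m - 1) \<le> real (m - 1) ^ (m - 1) / (2 * a * real (m - 1)) ^ (m - 1)"
    using assms fact_le_power[of "m - 1", where 'a = real]
    by (simp add: of_nat_diff divide_right_mono mult.assoc)
  also have "\<dots> = (1 / (2 * a)) ^ (m - 1)"
    using assms by (simp add: power_mult_distrib power_divide)
  finally have rate: "fact (m - 1) / (2 * ?E) ^ (m - 1) \<le> (1 / (2 * a)) ^ (m - 1)" .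
  have "fpref m ?E \<le> (2 * ?E) ^ 2 / (2 * real m) * (fact (m - 1) / (2 * ?E) ^ (m - 1))"
    using fpref_le_fact[of m ?E] assms \<open>?E > 0\<close> by simp
  also have "\<dots> \<le> 2 * a ^ 2 * (real m - 1) * (1 / (2 * a)) ^ (m - 1)"
    using assms rate by (intro mult_mono linear_prefactor_le) auto
  finally show ?thesis .
qed

lemma fpref_linear_bigo:
  assumes "a > 0"
  shows "\<exists>c. 0 < c \<and> c < 1 \<and> (\<lambda>m. fpref m (a * (real m - 1))) \<in> O(\<lambda>m. c ^ m)"
proof -
  obtain \<rho> where "0 < \<rho>" "\<rho> < 1"
    and bound: "\<And>m. m \<ge> 2 \<Longrightarrow> fpref m (a * (real m - 1)) \<le> 2 * a ^ 2 * (real m - 1) * \<rho> ^ (m - 1)"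
  proof (cases "a < 1")
    case True
    then show ?thesis
      using that[of "exp (- 4 * a * (1 - a))"] fpref_linear_le_exp assms by simp
  next
    case False
    then show ?thesis
      using that[of "1 / (2 * a)"] fpref_linear_le_power assms by simp
  qed
  have "(\<lambda>m. fpref m (a * (real m - 1))) \<in> O(\<lambda>m. real m * \<rho> ^ m)"
  proof (rule bigoI[where c = "2 * a ^ 2 / \<rho>"])
    show "\<forall>\<^sub>F m in sequentially. norm (fpref m (a * (real m - 1))) \<le> 2 * a ^ 2 / \<rho> * norm (real m * \<rho> ^ m)"
      unfolding eventually_sequentially
    proof (intro exI allI impI)
      fix m :: nat assume "m \<ge> 2"
      then have "\<rho> ^ m = \<rho> * \<rho> ^ (m - 1)" by (simp add: power_eq_if)
      then have "2 * a ^ 2 * (real m - 1) * \<rho> ^ (m - 1) \<le> 2 * a ^ 2 / \<rho> * (real m * \<rho> ^ m)"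
        using \<open>0 < \<rho>\<close> by simp (intro mult_left_mono mult_right_mono, auto)
      moreover have "0 \<le> fpref m (a * (real m - 1))"
        using \<open>m \<ge> 2\<close> assms by (intro fpref_nonneg) auto
      ultimately show "norm (fpref m (a * (real m - 1))) \<le> 2 * a ^ 2 / \<rho> * norm (real m * \<rho> ^ m)"
        using bound[OF \<open>m \<ge> 2\<close>] \<open>0 < \<rho>\<close> by simp
    qed
  qed
  also have "(\<lambda>m. real m * \<rho> ^ m) \<in> O(\<lambda>m. ((1 + \<rho>) / 2) ^ m)"
    using \<open>0 < \<rho>\<close> \<open>\<rho> < 1\<close> by (intro linear_times_power_bigo) auto
  finally show ?thesis
    using \<open>0 < \<rho>\<close> \<open>\<rho> < 1\<close> by (intro exI[of _ "(1 + \<rho>) / 2"]) auto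
qed

lemma fpref_sublinear_div_power_tendsto:
  assumes "a > 0" and "r < 1" and "0 < b" and "b < 1"
  shows "filterlim (\<lambda>m. fpref m (a * real m powr r) / b ^ m) at_top sequentially"
proof (rule filterlim_at_top_mono)
  define \<beta> where "\<beta> = - ln b"
  have "\<beta> > 0" using assms by (simp add: \<beta>_def)
  then have "filterlim (\<lambda>m. 2 * a ^ 2 * (exp (\<beta> * real m - 4 * a * real m powr r) * real m powr (2 * r - 1)))
               at_top sequentially"
    using assms by real_asymp
  then show "filterlim (\<lambda>m. 2 * a ^ 2 * (exp (- ln b * real m - 4 * a * real m powr r) * real m powr (2 * r - 1)))
               at_top sequentially"
    unfolding \<beta>_def .
  show "\<forall>\<^sub>F m in sequentially.
          2 * a ^ 2 * (exp (- ln b * real m - 4 * a * real m powr r) * real m powr (2 * r - 1))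
          \<le> fpref m (a * real m powr r) / b ^ m"
    unfolding eventually_sequentially
  proof (intro exI allI impI)
    fix m :: nat assume "m \<ge> 1"
    define X where "X = real m powr r"
    have "X > 0" using \<open>m \<ge> 1\<close> by (simp add: X_def)
    have power_b: "exp (- ln b * real m) = 1 / b ^ m"
      using assms exp_of_nat_mult[of m "ln b"] by (simp add: exp_minus mult.commute inverse_eq_divide)
    have "real m powr (2 * r - 1) = X ^ 2 / real m"
      using \<open>m \<ge> 1\<close> by (simp add: X_def powr_diff powr_power)
    then have "2 * a ^ 2 * (exp (- ln b * real m - 4 * a * real m powr r) * real m powr (2 * r - 1))
                     = (2 * (a * X)) ^ 2 / (2 * real m) * exp (- 4 * (a * X)) / b ^ m"
      unfolding exp_diff power_b X_def[symmetric] by (simp add: exp_minus inverse_eq_divide power_mult_distrib field_simps)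
    also have "\<dots> \<le> fpref m (a * X) / b ^ m"
      using \<open>m \<ge> 1\<close> \<open>X > 0\<close> assms by (intro divide_right_mono fpref_ge) auto
    finally show "2 * a ^ 2 * (exp (- ln b * real m - 4 * a * real m powr r) * real m powr (2 * r - 1))
                  \<le> fpref m (a * real m powr r) / b ^ m" unfolding X_def .
  qed
qed

lemma fpref_exp_small_bigo:
  assumes pos: "\<And>m. E m > 0" and "0 < q" and "q < 1" and "E \<in> O(\<lambda>m. q ^ m)"
  shows "(\<lambda>m. fpref m (E m)) \<in> O(\<lambda>m. (q ^ 2) ^ m)"
proof -
  obtain C where "C > 0" and small: "\<forall>\<^sub>F m in sequentially. norm (E m) \<le> C * norm (q ^ m)"
    using \<open>E \<in> O(\<lambda>m. q ^ m)\<close> by (elim landau_o.bigE)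
  show ?thesis
  proof (rule bigoI[where c = "C ^ 2 * exp (4 * C ^ 2)"])
    show "\<forall>\<^sub>F m in sequentially. norm (fpref m (E m)) \<le> C ^ 2 * exp (4 * C ^ 2) * norm ((q ^ 2) ^ m)"
      using small eventually_ge_at_top[of 2]
    proof eventually_elim
      case (elim m)
      have "q ^ m \<le> 1" using \<open>0 < q\<close> \<open>q < 1\<close> by (simp add: power_le_one)
      have "E m \<le> C * q ^ m" using elim pos[of m] \<open>0 < q\<close> by simp
      then have "E m ^ 2 \<le> (C * q ^ m) ^ 2"
        using pos[of m] by (intro power_mono) auto
      then have square: "E m ^ 2 \<le> C ^ 2 * (q ^ 2) ^ m"
        by (simp add: power_mult_distrib power_mult[symmetric] mult.commute[of m])
      have "C ^ 2 * (q ^ 2) ^ m \<le> C ^ 2"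
        using \<open>0 < q\<close> \<open>q < 1\<close> by (simp add: power_le_one mult_left_le)
      with square have "E m ^ 2 \<le> C ^ 2" by linarith
      with square have "E m ^ 2 * exp (4 * E m ^ 2) \<le> C ^ 2 * (q ^ 2) ^ m * exp (4 * C ^ 2)"
        by (intro mult_mono) auto
      moreover have "0 \<le> fpref m (E m)"
        using elim pos by (intro fpref_nonneg) auto
      ultimately show ?case
        using fpref_le_square[OF elim(2) pos[of m]] by (simp add: mult_ac)
    qed
  qed
qed

theorem mainTheorem7:
  shows "(\<forall>a::real. a > 0 \<longrightarrow>
            (\<exists>c::real. 0 < c \<and> c < 1 \<and>
               (\<lambda>m::nat. fpref m (a * (real m - 1))) \<in> O(\<lambda>m. c ^ m)))
       \<and> (\<forall>(a::real) (r::real) (b::real). a > 0 \<longrightarrow> r < 1 \<longrightarrow> 0 < b \<longrightarrow> b < 1 \<longrightarrow>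
            filterlim (\<lambda>m::nat. fpref m (a * real m powr r) / b ^ m) at_top sequentially)
       \<and> (\<forall>E::nat \<Rightarrow> real. (\<forall>m. E m > 0) \<longrightarrow>
            (\<exists>q::real. 0 < q \<and> q < 1 \<and> E \<in> O(\<lambda>m. q ^ m)) \<longrightarrow>
            (\<exists>c::real. 0 < c \<and> c < 1 \<and> (\<lambda>m. fpref m (E m)) \<in> O(\<lambda>m. c ^ m)))"
proof (intro conjI allI impI)
  show "\<exists>c. 0 < c \<and> c < 1 \<and> (\<lambda>m. fpref m (a * (real m - 1))) \<in> O(\<lambda>m. c ^ m)" if "a > 0" for a
    using fpref_linear_bigo[OF that] .
  show "filterlim (\<lambda>m. fpref m (a * real m powr r) / b ^ m) at_top sequentially"
    if "a > 0" "r < 1" "0 < b" "b < 1" for a r b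
    using fpref_sublinear_div_power_tendsto[OF that] .
  fix E :: "nat \<Rightarrow> real"
  assume "\<forall>m. E m > 0" and "\<exists>q. 0 < q \<and> q < 1 \<and> E \<in> O(\<lambda>m. q ^ m)"
  then obtain q where "0 < q" "q < 1" "E \<in> O(\<lambda>m. q ^ m)" by blast
  then have "(\<lambda>m. fpref m (E m)) \<in> O(\<lambda>m. (q ^ 2) ^ m)"
    using \<open>\<forall>m. E m > 0\<close> by (intro fpref_exp_small_bigo) auto
  then show "\<exists>c. 0 < c \<and> c < 1 \<and> (\<lambda>m. fpref m (E m)) \<in> O(\<lambda>m. c ^ m)"
    using \<open>0 < q\<close> \<open>q < 1\<close> by (intro exI[of _ "q ^ 2"]) (auto simp: power_less_one_iff)
qed

end
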